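(* Let $R$ be a ring and $R\le S=R[s_1,\dots,s_k]$ a ring extension generated as an $R$-algebra by elements $s_1,\dots,s_k\in S$ that commute with each other and satisfy $s_iR\subseteq Rs_i$ for all $i$. If $M$ is an $S$-module that is finitely presented as an $R$-module, then $M$ is finitely presented as an $S$-module. *)

theory Defs
  imports Main
begin

definition is_subring :: "'s::ring_1 set \<Rightarrow> bool" where
  "is_subring R \<longleftrightarrow> 0 \<in> R \<and> 1 \<in> R \<and>
     (\<forall>x\<in>R. \<forall>y\<in>R. x + y \<in> R \<and> x - y \<in> R \<and> x * y \<in> R)"

definition subring_generated :: "'s::ring_1 set \<Rightarrow> 's set" where
  "subring_generated A = \<Inter>{T. is_subring T \<and> A \<subseteq> T}"

definition is_left_module :: "('s::ring_1 \<Rightarrow> 'm::ab_group_add \<Rightarrow> 'm) \<Rightarrow> bool" where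
  "is_left_module act \<longleftrightarrow>
     (\<forall>a b x. act (a + b) x = act a x + act b x) \<and>
     (\<forall>a x y. act a (x + y) = act a x + act a y) \<and>
     (\<forall>a b x. act (a * b) x = act a (act b x)) \<and>
     (\<forall>x. act 1 x = x)"

text \<open>Vectors of length n with entries in A (the free left A-module A^n),
  represented as functions nat => 's vanishing from index n on.\<close>
definition vecs :: "'s::ring_1 set \<Rightarrow> nat \<Rightarrow> (nat \<Rightarrow> 's) set" where
  "vecs A n = {c. (\<forall>i<n. c i \<in> A) \<and> (\<forall>i\<ge>n. c i = 0)}"

text \<open>The module (whole type 'm, with action act restricted to the subring A) is finitely
  presented as a left A-module: there are finitely many generators g 0, ..., g (n-1) such that
  every element is an A-linear combination of them, and the module of relations
  (the kernel of A^n -> M) is a finitely generated A-submodule of A^n.\<close>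
definition finitely_presented_over ::
  "'s::ring_1 set \<Rightarrow> ('s \<Rightarrow> 'm::ab_group_add \<Rightarrow> 'm) \<Rightarrow> bool" where
  "finitely_presented_over A act \<longleftrightarrow>
     (\<exists>(n::nat) (g::nat \<Rightarrow> 'm).
        (\<forall>x. \<exists>c\<in>vecs A n. x = (\<Sum>i<n. act (c i) (g i))) \<and>
        (\<exists>(m::nat) (v::nat \<Rightarrow> nat \<Rightarrow> 's).
           (\<forall>j<m. v j \<in> vecs A n) \<and>
           {c \<in> vecs A n. (\<Sum>i<n. act (c i) (g i)) = 0} =
           {(\<lambda>i. \<Sum>j<m. a j * v j i) | a. \<forall>j<m. a j \<in> A}))"

end

theory Submission
  imports Defs "HOL-Library.Function_Algebras" "HOL-Library.Set_Algebras"
begin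

text \<open>Let \<open>g\<^sub>1, \<dots>, g\<^sub>n\<close> generate \<open>M\<close> over \<open>R\<close>, with module of relations generated by
  \<open>v\<^sub>1, \<dots>, v\<^sub>m \<in> R\<^sup>n\<close>, and expand \<open>s\<^sub>l g\<^sub>i = \<Sum>\<^sub>p \<rho>\<^sub>l\<^sub>i\<^sub>p g\<^sub>p\<close> with \<open>\<rho>\<^sub>l\<^sub>i \<in> R\<^sup>n\<close>. Over \<open>S\<close> the
  relations are generated by the \<open>v\<^sub>j\<close> together with \<open>w\<^sub>l\<^sub>i = s\<^sub>l e\<^sub>i - \<rho>\<^sub>l\<^sub>i\<close>. Let \<open>N\<close> be their
  \<open>S\<close>-span. The elements \<open>x \<in> S\<close> with \<open>x (R\<^sup>n + N) \<subseteq> R\<^sup>n + N\<close> form a subring; it contains \<open>R\<close>,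
  and it contains each \<open>s\<^sub>l\<close> because \<open>s\<^sub>l r e\<^sub>i = r' s\<^sub>l e\<^sub>i = r' (\<rho>\<^sub>l\<^sub>i + w\<^sub>l\<^sub>i)\<close> by normality.
  Hence it is all of \<open>S\<close>, so \<open>S\<^sup>n = R\<^sup>n + N\<close>. A relation \<open>r + u\<close> over \<open>S\<close> with \<open>r \<in> R\<^sup>n\<close>,
  \<open>u \<in> N\<close> makes \<open>r\<close> a relation over \<open>R\<close>, so \<open>r\<close> lies in the \<open>R\<close>-span of the \<open>v\<^sub>j\<close>, inside \<open>N\<close>.

  Vectors are functions \<open>nat \<Rightarrow> 's\<close> with the pointwise operations of \<open>Function_Algebras\<close>, and
  \<open>vecs R n + N\<close> is a sum of sets in the sense of \<open>Set_Algebras\<close>.\<close>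

definition single_vec :: "'i \<Rightarrow> 's::ring_1 \<Rightarrow> 'i \<Rightarrow> 's" where
  "single_vec i x = (\<lambda>p. if p = i then x else 0)"

definition scale_vec :: "'s::ring_1 \<Rightarrow> ('i \<Rightarrow> 's) \<Rightarrow> 'i \<Rightarrow> 's" where
  "scale_vec x c = (\<lambda>p. x * c p)"

lemma scale_vec_apply [simp]: "scale_vec x c p = x * c p"
  by (simp add: scale_vec_def)

lemma sum_fun_apply: "(\<Sum>a\<in>A. f a) x = (\<Sum>a\<in>A. f a x)"
  by (induction A rule: infinite_finite_induct) simp_all

lemma scale_vec_add: "scale_vec x (c + d) = scale_vec x c + scale_vec x d"
  by (simp add: fun_eq_iff distrib_left)

lemma scale_vec_add_left: "scale_vec (x + y) c = scale_vec x c + scale_vec y c"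
  by (simp add: fun_eq_iff distrib_right)

lemma scale_vec_diff_left: "scale_vec (x - y) c = scale_vec x c - scale_vec y c"
  by (simp add: fun_eq_iff left_diff_distrib)

lemma scale_vec_mult: "scale_vec (x * y) c = scale_vec x (scale_vec y c)"
  by (simp add: fun_eq_iff mult.assoc)

lemma scale_vec_single_vec: "scale_vec x (single_vec i y) = single_vec i (x * y)"
  by (simp add: fun_eq_iff single_vec_def)

lemma scale_vec_sum: "scale_vec x (\<Sum>a\<in>A. f a) = (\<Sum>a\<in>A. scale_vec x (f a))"
  by (simp add: fun_eq_iff sum_fun_apply sum_distrib_left)

lemma vecs_eq_sum_single_vec:
  assumes "c \<in> vecs A n"
  shows "c = (\<Sum>p<n. single_vec p (c p))"
  using assms by (auto simp: fun_eq_iff sum_fun_apply single_vec_def vecs_def)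

lemma vecs_mono: "A \<subseteq> B \<Longrightarrow> vecs A n \<subseteq> vecs B n"
  by (auto simp: vecs_def)

lemma single_vec_in_vecs: "i < n \<Longrightarrow> x \<in> A \<Longrightarrow> 0 \<in> A \<Longrightarrow> single_vec i x \<in> vecs A n"
  by (simp add: vecs_def single_vec_def)

lemma zero_in_vecs: "0 \<in> A \<Longrightarrow> 0 \<in> vecs A n"
  by (simp add: vecs_def)

lemma diff_in_vecs:
  "is_subring A \<Longrightarrow> c \<in> vecs A n \<Longrightarrow> d \<in> vecs A n \<Longrightarrow> c - d \<in> vecs A n"
  by (simp add: vecs_def is_subring_def)

lemma scale_vec_in_vecs:
  "is_subring A \<Longrightarrow> x \<in> A \<Longrightarrow> c \<in> vecs A n \<Longrightarrow> scale_vec x c \<in> vecs A n"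
  by (simp add: vecs_def is_subring_def)

lemma subring_generated_least:
  "is_subring T \<Longrightarrow> A \<subseteq> T \<Longrightarrow> subring_generated A \<subseteq> T"
  unfolding subring_generated_def by blast

lemma sum_in_add_closed:
  assumes "0 \<in> Q" "\<And>c d. c \<in> Q \<Longrightarrow> d \<in> Q \<Longrightarrow> c + d \<in> Q" "\<And>a. a \<in> A \<Longrightarrow> f a \<in> Q"
  shows "(\<Sum>a\<in>A. f a) \<in> Q"
  using assms(3) by (induction A rule: infinite_finite_induct) (simp_all add: assms(1,2))

lemma set_plus_diff_closed:
  fixes A B :: "'a::ab_group_add set"
  assumes "\<And>a a'. a \<in> A \<Longrightarrow> a' \<in> A \<Longrightarrow> a - a' \<in> A"
    and "\<And>b b'. b \<in> B \<Longrightarrow> b' \<in> B \<Longrightarrow> b - b' \<in> B"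
    and "c \<in> A + B" "d \<in> A + B"
  shows "c - d \<in> A + B"
proof -
  from \<open>c \<in> A + B\<close> obtain a b where "c = a + b" "a \<in> A" "b \<in> B" by (auto elim: set_plus_elim)
  moreover from \<open>d \<in> A + B\<close> obtain a' b' where "d = a' + b'" "a' \<in> A" "b' \<in> B" by (auto elim: set_plus_elim)
  ultimately have "c - d = (a - a') + (b - b')" "a - a' \<in> A" "b - b' \<in> B"
    using assms(1,2) by simp_all
  then show ?thesis by auto
qed

definition left_stabilizer :: "('i \<Rightarrow> 's::ring_1) set \<Rightarrow> 's set" where
  "left_stabilizer Q = {x. \<forall>c\<in>Q. scale_vec x c \<in> Q}"

lemma is_subring_left_stabilizer:
  fixes Q :: "('i \<Rightarrow> 's::ring_1) set"
  assumes "0 \<in> Q" and diff: "\<And>c d. c \<in> Q \<Longrightarrow> d \<in> Q \<Longrightarrow> c - d \<in> Q"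
  shows "is_subring (left_stabilizer Q)"
proof -
  have add: "c + d \<in> Q" if "c \<in> Q" "d \<in> Q" for c d
    using diff[OF that(1) diff[OF \<open>0 \<in> Q\<close> that(2)]] by simp
  show ?thesis
    unfolding is_subring_def left_stabilizer_def
    by (auto simp: scale_vec_add_left scale_vec_diff_left scale_vec_mult add diff
        \<open>0 \<in> Q\<close> scale_vec_def[of 0] scale_vec_def[of 1] zero_fun_def[symmetric])
qed

lemma vecs_UNIV_eq_vecs_plus:
  fixes R X :: "'s::ring_1 set" and N :: "(nat \<Rightarrow> 's) set"
  assumes R: "is_subring R" and generated: "subring_generated (R \<union> X) = UNIV"
    and N_0: "0 \<in> N" and N_add: "\<And>u u'. u \<in> N \<Longrightarrow> u' \<in> N \<Longrightarrow> u + u' \<in> N"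
    and N_scale: "\<And>x u. u \<in> N \<Longrightarrow> scale_vec x u \<in> N"
    and N_vecs: "N \<subseteq> vecs UNIV n"
    and X: "\<And>x i r. x \<in> X \<Longrightarrow> i < n \<Longrightarrow> r \<in> R \<Longrightarrow> single_vec i (x * r) \<in> vecs R n + N"
  shows "vecs UNIV n = vecs R n + N"
proof
  have R_0: "0 \<in> R" and R_1: "1 \<in> R" using R by (simp_all add: is_subring_def)
  let ?Q = "vecs R n + N"
  have N_diff: "u - u' \<in> N" if "u \<in> N" "u' \<in> N" for u u'
  proof -
    have "scale_vec (-1) u' = - u'" by (simp add: fun_eq_iff)
    then show ?thesis using N_add[OF that(1) N_scale[OF that(2), of "-1"]] by simp
  qed
  have N_Q: "N \<subseteq> ?Q" by (rule set_zero_plus2[OF zero_in_vecs[OF R_0]])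
  have vecs_Q: "vecs R n \<subseteq> ?Q" using set_zero_plus2[OF N_0] by (subst add.commute)
  have Q_0: "0 \<in> ?Q" using N_Q N_0 by blast
  have Q_diff: "c - d \<in> ?Q" if "c \<in> ?Q" "d \<in> ?Q" for c d
    by (rule set_plus_diff_closed[OF diff_in_vecs[OF R] N_diff that])
  have Q_add: "c + d \<in> ?Q" if "c \<in> ?Q" "d \<in> ?Q" for c d
    using Q_diff[OF that(1) Q_diff[OF Q_0 that(2)]] by simp
  have Q_sum: "(\<Sum>a\<in>A. f a) \<in> ?Q" if "\<And>a. a \<in> A \<Longrightarrow> f a \<in> ?Q" for A and f :: "'a \<Rightarrow> nat \<Rightarrow> 's"
    using sum_in_add_closed[OF Q_0 Q_add that] .
  have "R \<union> X \<subseteq> left_stabilizer ?Q"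
  proof (unfold left_stabilizer_def, intro subsetI CollectI ballI, elim UnE)
    fix x c assume "x \<in> R" "c \<in> ?Q"
    then show "scale_vec x c \<in> ?Q"
      by (auto elim!: set_plus_elim simp: scale_vec_add intro!: set_plus_intro scale_vec_in_vecs[OF R] N_scale)
  next
    fix x c assume x: "x \<in> X" and "c \<in> ?Q"
    then obtain r u where c: "c = r + u" "r \<in> vecs R n" "u \<in> N" by (auto elim: set_plus_elim)
    have "scale_vec x r = (\<Sum>p<n. single_vec p (x * r p))"
      by (subst vecs_eq_sum_single_vec[OF c(2)]) (simp add: scale_vec_sum scale_vec_single_vec)
    also have "\<dots> \<in> ?Q"
      using c(2) by (intro Q_sum X[OF x]) (simp_all add: vecs_def)
    finally show "scale_vec x c \<in> ?Q"
      unfolding c(1) scale_vec_add using Q_add N_Q N_scale[OF c(3)] by blast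
  qed
  then have "left_stabilizer ?Q = UNIV"
    using subring_generated_least[OF is_subring_left_stabilizer[OF Q_0 Q_diff]] generated by blast
  then have scale_Q: "scale_vec x c \<in> ?Q" if "c \<in> ?Q" for x c
    using that unfolding left_stabilizer_def by blast
  show "vecs UNIV n \<subseteq> ?Q"
  proof
    fix c :: "nat \<Rightarrow> 's" assume c: "c \<in> vecs UNIV n"
    have "single_vec p (c p) = scale_vec (c p) (single_vec p 1)" for p
      by (simp add: scale_vec_single_vec)
    moreover have "single_vec p 1 \<in> ?Q" if "p < n" for p
      using single_vec_in_vecs[OF that R_1 R_0] vecs_Q by blast
    ultimately have "(\<Sum>p<n. single_vec p (c p)) \<in> ?Q"
      by (auto intro!: Q_sum scale_Q)
    then show "c \<in> ?Q" using vecs_eq_sum_single_vec[OF c] by simp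
  qed
  show "?Q \<subseteq> vecs UNIV n"
    using vecs_mono[of R UNIV n] N_vecs by (auto elim!: set_plus_elim simp: vecs_def)
qed

definition left_span :: "'s::ring_1 set \<Rightarrow> nat \<Rightarrow> (nat \<Rightarrow> nat \<Rightarrow> 's) \<Rightarrow> (nat \<Rightarrow> 's) set" where
  "left_span A m v = {(\<lambda>i. \<Sum>j<m. a j * v j i) | a. \<forall>j<m. a j \<in> A}"

lemma left_span_conv_sum:
  "left_span A m v = {\<Sum>j<m. scale_vec (a j) (v j) | a. \<forall>j<m. a j \<in> A}"
  by (simp add: left_span_def fun_eq_iff sum_fun_apply)

lemma left_span_sumI:
  "(\<And>j. j < m \<Longrightarrow> a j \<in> A) \<Longrightarrow> (\<Sum>j<m. scale_vec (a j) (v j)) \<in> left_span A m v"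
  unfolding left_span_conv_sum by blast

lemma left_span_least:
  assumes "0 \<in> N" "\<And>u u'. u \<in> N \<Longrightarrow> u' \<in> N \<Longrightarrow> u + u' \<in> N"
    and "\<And>x u. x \<in> A \<Longrightarrow> u \<in> N \<Longrightarrow> scale_vec x u \<in> N"
    and "\<And>j. j < m \<Longrightarrow> v j \<in> N"
  shows "left_span A m v \<subseteq> N"
  unfolding left_span_conv_sum using assms by (auto intro!: sum_in_add_closed)

lemma left_span_UNIV_add:
  assumes "u \<in> left_span UNIV m v" "u' \<in> left_span UNIV m v"
  shows "u + u' \<in> left_span UNIV m v"
proof -
  obtain a b where "u = (\<Sum>j<m. scale_vec (a j) (v j))" "u' = (\<Sum>j<m. scale_vec (b j) (v j))"
    using assms unfolding left_span_conv_sum by blast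
  then have "u + u' = (\<Sum>j<m. scale_vec (a j + b j) (v j))"
    by (simp add: scale_vec_add_left sum.distrib)
  then show ?thesis by (simp add: left_span_sumI)
qed

lemma left_span_UNIV_scale:
  assumes "u \<in> left_span UNIV m v"
  shows "scale_vec x u \<in> left_span UNIV m v"
proof -
  obtain a where "u = (\<Sum>j<m. scale_vec (a j) (v j))"
    using assms unfolding left_span_conv_sum by blast
  then have "scale_vec x u = (\<Sum>j<m. scale_vec (x * a j) (v j))"
    by (simp add: scale_vec_sum scale_vec_mult)
  then show ?thesis by (simp add: left_span_sumI)
qed

lemma zero_in_left_span_UNIV: "0 \<in> left_span UNIV m v"
proof -
  have "(0 :: nat \<Rightarrow> 'a::ring_1) = (\<Sum>j<m. scale_vec 0 (v j))"
    by (simp add: fun_eq_iff sum_fun_apply)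
  also have "\<dots> \<in> left_span UNIV m v" by (rule left_span_sumI) simp
  finally show ?thesis .
qed

lemma generator_in_left_span:
  assumes "j < m" "0 \<in> A" "1 \<in> A" shows "v j \<in> left_span A m v"
proof -
  have "v j = (\<Sum>j'<m. scale_vec (if j' = j then 1 else 0) (v j'))"
    using assms by (simp add: fun_eq_iff sum_fun_apply if_distrib[of "\<lambda>x. x * _"] cong: if_cong)
  also have "\<dots> \<in> left_span A m v" using assms by (intro left_span_sumI) simp
  finally show ?thesis .
qed

definition lincomb :: "('s::ring_1 \<Rightarrow> 'm::ab_group_add \<Rightarrow> 'm) \<Rightarrow> nat \<Rightarrow> (nat \<Rightarrow> 's) \<Rightarrow> (nat \<Rightarrow> 'm) \<Rightarrow> 'm"
  where "lincomb act n c g = (\<Sum>i<n. act (c i) (g i))"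

definition relations ::
  "'s::ring_1 set \<Rightarrow> ('s \<Rightarrow> 'm::ab_group_add \<Rightarrow> 'm) \<Rightarrow> nat \<Rightarrow> (nat \<Rightarrow> 'm) \<Rightarrow> (nat \<Rightarrow> 's) set"
  where "relations A act n g = {c \<in> vecs A n. lincomb act n c g = 0}"

lemma finitely_presented_over_iff:
  "finitely_presented_over A act \<longleftrightarrow>
     (\<exists>n g. (\<forall>x. \<exists>c\<in>vecs A n. x = lincomb act n c g) \<and>
        (\<exists>m v. (\<forall>j<m. v j \<in> vecs A n) \<and> relations A act n g = left_span A m v))"
  by (simp add: finitely_presented_over_def lincomb_def relations_def left_span_def)

lemma relations_mono: "A \<subseteq> B \<Longrightarrow> relations A act n g \<subseteq> relations B act n g"
  unfolding relations_def using vecs_mono[of A B n] by blast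

locale left_module =
  fixes act :: "'s::ring_1 \<Rightarrow> 'm::ab_group_add \<Rightarrow> 'm"
  assumes is_left_module: "is_left_module act"
begin

lemma act_add_left: "act (a + b) x = act a x + act b x"
  and act_add_right: "act a (x + y) = act a x + act a y"
  and act_mult: "act (a * b) x = act a (act b x)"
  using is_left_module by (simp_all add: is_left_module_def)

lemma act_0_left: "act 0 x = 0"
  using act_add_left[of 0 0 x] by simp

lemma act_0_right: "act a 0 = 0"
  using act_add_right[of a 0 0] by simp

lemma act_diff_left: "act (a - b) x = act a x - act b x"
  using act_add_left[of "a - b" b x] by (simp add: eq_diff_eq)

lemma act_sum_right: "act a (\<Sum>j\<in>J. f j) = (\<Sum>j\<in>J. act a (f j))"
  by (induction J rule: infinite_finite_induct) (simp_all add: act_0_right act_add_right)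

lemma lincomb_0: "lincomb act n 0 g = 0"
  by (simp add: lincomb_def act_0_left)

lemma lincomb_add: "lincomb act n (c + d) g = lincomb act n c g + lincomb act n d g"
  by (simp add: lincomb_def act_add_left sum.distrib)

lemma lincomb_diff: "lincomb act n (c - d) g = lincomb act n c g - lincomb act n d g"
  by (simp add: lincomb_def act_diff_left sum_subtractf)

lemma lincomb_scale_vec: "lincomb act n (scale_vec x c) g = act x (lincomb act n c g)"
  by (simp add: lincomb_def act_mult act_sum_right)

lemma lincomb_single_vec: "i < n \<Longrightarrow> lincomb act n (single_vec i x) g = act x (g i)"
  by (simp add: lincomb_def single_vec_def if_distrib[of "\<lambda>a. act a _"] act_0_left cong: if_cong)

lemma single_vec_minus_expansion_in_relations:
  assumes "i < n" "c \<in> vecs UNIV n" "act x (g i) = lincomb act n c g"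
  shows "single_vec i x - c \<in> relations UNIV act n g"
  using assms single_vec_in_vecs[of i n x UNIV] diff_in_vecs[of UNIV]
  by (simp add: relations_def lincomb_diff lincomb_single_vec is_subring_def)

lemma left_span_UNIV_subset_relations:
  "(\<And>j. j < m \<Longrightarrow> v j \<in> relations UNIV act n g) \<Longrightarrow> left_span UNIV m v \<subseteq> relations UNIV act n g"
  by (rule left_span_least)
    (auto simp: relations_def lincomb_0 lincomb_add lincomb_scale_vec act_0_right vecs_def)

lemma relations_UNIV_eq:
  assumes decomp: "vecs UNIV n = vecs R n + N"
    and N_add: "\<And>u u'. u \<in> N \<Longrightarrow> u' \<in> N \<Longrightarrow> u + u' \<in> N"
    and N_rel: "N \<subseteq> relations UNIV act n g" and rel_R: "relations R act n g \<subseteq> N"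
  shows "relations UNIV act n g = N"
proof
  show "relations UNIV act n g \<subseteq> N"
  proof
    fix c assume c: "c \<in> relations UNIV act n g"
    then obtain r u where ru: "c = r + u" "r \<in> vecs R n" "u \<in> N"
      using decomp by (auto simp: relations_def elim: set_plus_elim)
    have "lincomb act n r g = lincomb act n c g - lincomb act n u g"
      by (simp add: ru(1) lincomb_add)
    then have "r \<in> relations R act n g"
      using c ru(2,3) N_rel by (auto simp: relations_def)
    then show "c \<in> N" using ru rel_R N_add by blast
  qed
qed (fact N_rel)

lemma finitely_presented_over_UNIV_by_relations:
  assumes R: "is_subring R" and generated: "subring_generated (R \<union> X) = UNIV"
    and spans: "\<forall>x. \<exists>c\<in>vecs R n. x = lincomb act n c g"
    and rel_R: "relations R act n g = left_span R m v"
    and V_rel: "\<And>j. j < M \<Longrightarrow> V j \<in> relations UNIV act n g"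
    and v_V: "\<And>j. j < m \<Longrightarrow> v j \<in> left_span UNIV M V"
    and X: "\<And>x i r. x \<in> X \<Longrightarrow> i < n \<Longrightarrow> r \<in> R \<Longrightarrow>
      single_vec i (x * r) \<in> vecs R n + left_span UNIV M V"
  shows "finitely_presented_over UNIV act"
proof -
  let ?N = "left_span UNIV M V"
  have N_rel: "?N \<subseteq> relations UNIV act n g"
    by (rule left_span_UNIV_subset_relations[OF V_rel])
  have "vecs UNIV n = vecs R n + ?N"
    using N_rel by (intro vecs_UNIV_eq_vecs_plus[OF R generated zero_in_left_span_UNIV
        left_span_UNIV_add left_span_UNIV_scale _ X]) (auto simp: relations_def)
  moreover have "relations R act n g \<subseteq> ?N"
    unfolding rel_R
    by (rule left_span_least[OF zero_in_left_span_UNIV left_span_UNIV_add left_span_UNIV_scale v_V])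
  ultimately have "relations UNIV act n g = ?N"
    using relations_UNIV_eq left_span_UNIV_add N_rel by blast
  moreover have "\<forall>x. \<exists>c\<in>vecs UNIV n. x = lincomb act n c g"
    using spans vecs_mono[of R UNIV n] by blast
  moreover have "\<forall>j<M. V j \<in> vecs UNIV n"
    using V_rel by (simp add: relations_def)
  ultimately show ?thesis unfolding finitely_presented_over_iff by blast
qed

end

lemma single_vec_mult_in_vecs_plus:
  assumes R: "is_subring R" and "r' \<in> R" "x * r = r' * x" "\<rho> \<in> vecs R n"
    and "single_vec i x - \<rho> \<in> N" and N_scale: "\<And>y u. u \<in> N \<Longrightarrow> scale_vec y u \<in> N"
  shows "single_vec i (x * r) \<in> vecs R n + N"
proof -
  have "single_vec i (x * r) = scale_vec r' \<rho> + scale_vec r' (single_vec i x - \<rho>)"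
    by (simp add: assms(3) scale_vec_single_vec[symmetric] scale_vec_add[symmetric])
  then show ?thesis
    using scale_vec_in_vecs[OF assms(1,2,4)] N_scale[OF assms(5)] by auto
qed

lemma enumerate_families:
  fixes v :: "nat \<Rightarrow> 'a" and w :: "nat \<Rightarrow> nat \<Rightarrow> 'a"
  obtains V where "\<And>j. j < m + k * n \<Longrightarrow> V j \<in> v ` {..<m} \<union> case_prod w ` ({..<k} \<times> {..<n})"
    and "\<And>j. j < m \<Longrightarrow> V j = v j"
    and "\<And>l i. l < k \<Longrightarrow> i < n \<Longrightarrow> \<exists>j < m + k * n. V j = w l i"
proof
  define V where "V j = (if j < m then v j else w ((j - m) div n) ((j - m) mod n))" for j
  show "V j \<in> v ` {..<m} \<union> case_prod w ` ({..<k} \<times> {..<n})" if "j < m + k * n" for j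
  proof (cases "j < m")
    case False
    with that have "j - m < k * n" by simp
    moreover from this have "n > 0" by (cases n) simp_all
    ultimately have "(j - m) div n < k" "(j - m) mod n < n"
      by (simp_all add: less_mult_imp_div_less)
    with False show ?thesis by (auto simp: V_def)
  qed (simp add: V_def)
  show "V j = v j" if "j < m" for j using that by (simp add: V_def)
  show "\<exists>j < m + k * n. V j = w l i" if "l < k" "i < n" for l i
  proof (intro exI conjI)
    have "l * n + i < Suc l * n" using that by simp
    also have "\<dots> \<le> k * n" using that by (intro mult_le_mono1) simp
    finally show "m + l * n + i < m + k * n" by simp
    show "V (m + l * n + i) = w l i" using that by (simp add: V_def)
  qed
qed

theorem mainTheorem11:
  fixes R :: "'s::ring_1 set"
    and s :: "nat \<Rightarrow> 's"
    and k :: nat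
    and act :: "'s \<Rightarrow> 'm::ab_group_add \<Rightarrow> 'm"
  assumes R_subring: "is_subring R"
    and generated: "subring_generated (R \<union> s ` {..<k}) = UNIV"
    and commute: "\<forall>i<k. \<forall>j<k. s i * s j = s j * s i"
    and normalizing: "\<forall>i<k. \<forall>r\<in>R. \<exists>r'\<in>R. s i * r = r' * s i"
    and module: "is_left_module act"
    and fp_R: "finitely_presented_over R act"
  shows "finitely_presented_over UNIV act"
proof -
  interpret left_module act by (rule left_module.intro[OF module])
  have R_0: "0 \<in> R" and R_1: "1 \<in> R" using R_subring by (simp_all add: is_subring_def)
  obtain n g m v where spans: "\<forall>x. \<exists>c\<in>vecs R n. x = lincomb act n c g"
    and rel_R: "relations R act n g = left_span R m v"
    using fp_R unfolding finitely_presented_over_iff by blast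
  have "\<forall>l i. \<exists>c\<in>vecs R n. act (s l) (g i) = lincomb act n c g"
    using spans by blast
  then obtain \<rho> where \<rho>: "\<And>l i. \<rho> l i \<in> vecs R n" "\<And>l i. act (s l) (g i) = lincomb act n (\<rho> l i) g"
    by metis
  define w where "w l i = single_vec i (s l) - \<rho> l i" for l i
  obtain V where V: "\<And>j. j < m + k * n \<Longrightarrow> V j \<in> v ` {..<m} \<union> case_prod w ` ({..<k} \<times> {..<n})"
    and V_v: "\<And>j. j < m \<Longrightarrow> V j = v j"
    and V_w: "\<And>l i. l < k \<Longrightarrow> i < n \<Longrightarrow> \<exists>j < m + k * n. V j = w l i"
    using enumerate_families[of m k n v w] by blast
  let ?N = "left_span UNIV (m + k * n) V"
  show ?thesis
  proof (rule finitely_presented_over_UNIV_by_relations[OF R_subring generated spans rel_R])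
    have "v j \<in> relations UNIV act n g" if "j < m" for j
      using generator_in_left_span[OF that R_0 R_1] rel_R relations_mono[of R UNIV] by blast
    moreover have "w l i \<in> relations UNIV act n g" if "i < n" for l i
      using \<rho> vecs_mono[of R UNIV n] unfolding w_def
      by (intro single_vec_minus_expansion_in_relations[OF that]) auto
    ultimately show "V j \<in> relations UNIV act n g" if "j < m + k * n" for j
      using V[OF that] by auto
  next
    show "v j \<in> ?N" if "j < m" for j
      using generator_in_left_span[of j "m + k * n" UNIV V] V_v that by simp
  next
    fix x i r assume "x \<in> s ` {..<k}" and i: "i < n" and "r \<in> R"
    then obtain l r' where l: "l < k" "x = s l" and r': "r' \<in> R" "s l * r = r' * s l"
      using normalizing by blast
    obtain j where "j < m + k * n" "V j = w l i" using V_w[OF l(1) i] by blast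
    then have "w l i \<in> ?N" using generator_in_left_span[of j _ UNIV V] by simp
    then show "single_vec i (x * r) \<in> vecs R n + ?N" unfolding l(2) w_def
      by (rule single_vec_mult_in_vecs_plus[OF R_subring r' \<rho>(1) _ left_span_UNIV_scale])
qed
qed

end
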